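(* For $U\in\mathcal{U}_N$ and $j\in[n]$, $\mathrm{Inf}_j[U]=1-\frac{1}{2^{n+1}}\mathrm{Tr}\big((\mathrm{Tr}_jU^\dagger)(\mathrm{Tr}_jU)\big)$. More generally, for $S\subseteq[n]$, $\mathrm{Inf}_S[U]=1-\frac{1}{2^{n+|S|}}\mathrm{Tr}\big((\mathrm{Tr}_SU^\dagger)(\mathrm{Tr}_SU)\big)$.
   Context: $N=2^n$, $\mathcal{U}_N$ is the set of $N\times N$ unitaries. For $x\in\mathbb{Z}_4^n$, $\sigma_x=\sigma_{x_1}\otimes\cdots\otimes\sigma_{x_n}$ with $\sigma_0=I,\sigma_1=X,\sigma_2=Y,\sigma_3=Z$, and $\mathrm{supp}(x)=\{i:x_i\ne0\}$. Writing $U=\sum_x\widehat{U}(x)\sigma_x$, $\mathrm{Inf}_S[U]=\sum_{x:\,\mathrm{supp}(x)\cap S\ne\emptyset}|\widehat{U}(x)|^2$ and $\mathrm{Inf}_j[U]=\mathrm{Inf}_{\{j\}}[U]$. The partial trace over $S$ is $\mathrm{Tr}_S(U)=\sum_{k\in\{0,1\}^S}(I_{\overline S}\otimes\langle k|)\,U\,(I_{\overline S}\otimes|k\rangle)$, an operator on the qubits in $\overline{S}=[n]\setminus S$; $\mathrm{Tr}_j=\mathrm{Tr}_{\{j\}}$. *)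

theory Defs
  imports Complex_Main "Jordan_Normal_Form.Matrix"
begin

definition mtrace :: "complex mat \<Rightarrow> complex" where
  "mtrace A = (\<Sum>i<dim_row A. A $$ (i, i))"

definition adj :: "complex mat \<Rightarrow> complex mat" where
  "adj A = mat (dim_col A) (dim_row A) (\<lambda>(i, j). cnj (A $$ (j, i)))"

definition unitary_mat :: "nat \<Rightarrow> complex mat \<Rightarrow> bool" where
  "unitary_mat d U \<longleftrightarrow> U \<in> carrier_mat d d \<and> adj U * U = 1\<^sub>m d \<and> U * adj U = 1\<^sub>m d"

text \<open>Qubits are numbered 1..n.  A basis index i < 2^n of the n-qubit space encodes the
bit string (b_1,...,b_n) with qubit 1 the most significant bit, matching the tensor
order sigma_{x_1} (x) ... (x) sigma_{x_n}.\<close>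

definition qbit :: "nat \<Rightarrow> nat \<Rightarrow> nat \<Rightarrow> nat" where
  "qbit n q i = i div 2 ^ (n - q) mod 2"

definition pauli1 :: "nat \<Rightarrow> complex mat" where
  "pauli1 a = (if a = 0 then mat_of_rows_list 2 [[1, 0], [0, 1]]
               else if a = 1 then mat_of_rows_list 2 [[0, 1], [1, 0]]
               else if a = 2 then mat_of_rows_list 2 [[0, -\<i>], [\<i>, 0]]
               else mat_of_rows_list 2 [[1, 0], [0, -1]])"

text \<open>Z_4^n as functions x with x q < 4 for q in [n] and x q = 0 outside [n].\<close>
definition Z4n :: "nat \<Rightarrow> (nat \<Rightarrow> nat) set" where
  "Z4n n = {x. (\<forall>q. x q < 4) \<and> (\<forall>q. q \<notin> {1..n} \<longrightarrow> x q = 0)}"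

definition supp :: "nat \<Rightarrow> (nat \<Rightarrow> nat) \<Rightarrow> nat set" where
  "supp n x = {q \<in> {1..n}. x q \<noteq> 0}"

definition pauli :: "nat \<Rightarrow> (nat \<Rightarrow> nat) \<Rightarrow> complex mat" where
  "pauli n x = mat (2 ^ n) (2 ^ n)
     (\<lambda>(i, j). \<Prod>q\<in>{1..n}. pauli1 (x q) $$ (qbit n q i, qbit n q j))"

text \<open>Pauli (Fourier) coefficients: the coefficients in U = sum_x hat U(x) sigma_x
(the matrix identity written entrywise, as matrices do not form a monoid under + in JNF).\<close>
definition pauli_coeff :: "nat \<Rightarrow> complex mat \<Rightarrow> (nat \<Rightarrow> nat) \<Rightarrow> complex" where
  "pauli_coeff n U = (THE c. (\<forall>x. x \<notin> Z4n n \<longrightarrow> c x = 0) \<and>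
     (\<forall>i<2 ^ n. \<forall>j<2 ^ n. U $$ (i, j) = (\<Sum>x\<in>Z4n n. c x * pauli n x $$ (i, j))))"

definition influence :: "nat \<Rightarrow> nat set \<Rightarrow> complex mat \<Rightarrow> real" where
  "influence n S U = (\<Sum>x\<in>{x \<in> Z4n n. supp n x \<inter> S \<noteq> {}}. (cmod (pauli_coeff n U x))\<^sup>2)"

text \<open>For a set Q of qubits with m = card Q elements, listed increasingly as
q_0 < ... < q_{m-1}, an index a < 2^m of the space of the qubits in Q assigns to q_j the
bit a div 2^(m-1-j) mod 2, where j = card {p in Q. p < q_j} is the position of q_j (again the first qubit most significant).\<close>
definition sub_bit :: "nat set \<Rightarrow> nat \<Rightarrow> nat \<Rightarrow> nat" where
  "sub_bit Q a q = (if q \<in> Q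
      then a div 2 ^ (card Q - Suc (card {p \<in> Q. p < q})) mod 2 else 0)"

text \<open>Full index of the basis state |a> (on the complement of S) tensor |k> (on S).\<close>
definition merge_idx :: "nat \<Rightarrow> nat set \<Rightarrow> nat \<Rightarrow> nat \<Rightarrow> nat" where
  "merge_idx n S a k = (\<Sum>q\<in>{1..n}.
      (if q \<in> S then sub_bit S k q else sub_bit ({1..n} - S) a q) * 2 ^ (n - q))"

text \<open>Tr_S(U) = sum_k (I (x) <k|) U (I (x) |k>), an operator on the qubits of [n] - S.\<close>
definition ptrace :: "nat \<Rightarrow> nat set \<Rightarrow> complex mat \<Rightarrow> complex mat" where
  "ptrace n S U = mat (2 ^ card ({1..n} - S)) (2 ^ card ({1..n} - S))
     (\<lambda>(a, b). \<Sum>k<2 ^ card S. U $$ (merge_idx n S a k, merge_idx n S b k))"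

end

theory Submission
  imports Defs
begin

text \<open>
  For the Hilbert--Schmidt inner product the Pauli strings are orthogonal,
  \<open>Tr(\<sigma>\<^sub>y\<^sup>\<dagger> \<sigma>\<^sub>x) = 2^n \<delta>\<^sub>x\<^sub>y\<close>, and complete, so the Pauli coefficients of \<open>U\<close> are
  \<open>Tr(\<sigma>\<^sub>x\<^sup>\<dagger> U) / 2^n\<close> and Parseval gives \<open>\<Sum>\<^sub>x |\<hat>U(x)|\<^sup>2 = Tr(U\<^sup>\<dagger> U) / 2^n = 1\<close> for unitary \<open>U\<close>.
  Since the only single-qubit Pauli matrix with non-zero trace is \<open>I\<close>, tracing out the
  qubits in \<open>S\<close> annihilates every \<open>\<sigma>\<^sub>x\<close> whose support meets \<open>S\<close> and turns the others
  into \<open>2^|S|\<close> times the Pauli string \<open>x\<close> on the remaining \<open>n - |S|\<close> qubits.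
  Orthogonality there yields
  \<open>Tr((Tr\<^sub>S U)\<^sup>\<dagger> Tr\<^sub>S U) = 2^(n+|S|) \<Sum>\<^bsub>supp x \<inter> S = {}\<^esub> |\<hat>U(x)|\<^sup>2 = 2^(n+|S|) (1 - Inf\<^sub>S[U])\<close>,
  and \<open>Tr\<^sub>S(U\<^sup>\<dagger>) = (Tr\<^sub>S U)\<^sup>\<dagger>\<close>.
\<close>

lemma binary_expansion:
  assumes "(k::nat) < 2 ^ m"
  shows "(\<Sum>j<m. k div 2 ^ j mod 2 * 2 ^ j) = k"
proof -
  have "take_bit m k = k"
    using assms by (simp add: take_bit_nat_eq_self_iff)
  then show ?thesis
    using take_bit_sum[of m k]
    by (simp add: push_bit_eq_mult bit_iff_odd of_bool_odd_eq_mod_2 atLeast0LessThan)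
qed

lemma inj_on_card_eq_imp_bij_betw:
  assumes "inj_on f A" "f ` A \<subseteq> B" "finite B" "card A = card B"
  shows "bij_betw f A B"
proof (rule bij_betw_imageI)
  show "f ` A = B"
    using card_subset_eq[OF assms(3,2)] card_image[OF assms(1)] assms(4) by simp
qed (fact assms(1))

lemma bij_betw_card_less:
  fixes Q :: "'a::linorder set"
  assumes "finite Q"
  shows "bij_betw (\<lambda>q. card {p \<in> Q. p < q}) Q {..<card Q}"
proof (rule inj_on_card_eq_imp_bij_betw)
  have mono: "card {p \<in> Q. p < q} < card {p \<in> Q. p < q'}" if "q \<in> Q" "q < q'" for q q'
    using that assms by (intro psubset_card_mono) auto
  show "inj_on (\<lambda>q. card {p \<in> Q. p < q}) Q"
  proof (rule inj_onI)
    fix q q' assume "q \<in> Q" "q' \<in> Q" "card {p \<in> Q. p < q} = card {p \<in> Q. p < q'}"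
    then show "q = q'"
      using mono[of q q'] mono[of q' q] by (cases q q' rule: linorder_cases) auto
  qed
  show "(\<lambda>q. card {p \<in> Q. p < q}) ` Q \<subseteq> {..<card Q}"
    using assms by (auto intro!: psubset_card_mono)
qed simp_all

lemma sub_bit_eq_imp_eq:
  assumes Q: "finite Q" and ab: "a < 2 ^ card Q" "b < 2 ^ card Q"
    and eq: "\<forall>q\<in>Q. sub_bit Q a q = sub_bit Q b q"
  shows "a = b"
proof -
  have "a div 2 ^ j mod 2 = b div 2 ^ j mod 2" if "j < card Q" for j
  proof -
    have "card Q - Suc j \<in> (\<lambda>q. card {p \<in> Q. p < q}) ` Q"
      using bij_betw_imp_surj_on[OF bij_betw_card_less[OF Q]] that by auto
    then obtain q where "q \<in> Q" "card {p \<in> Q. p < q} = card Q - Suc j"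
      by auto
    then show ?thesis
      using eq that by (auto simp: sub_bit_def Suc_diff_Suc)
  qed
  then have "(\<Sum>j<card Q. a div 2 ^ j mod 2 * 2 ^ j) = (\<Sum>j<card Q. b div 2 ^ j mod 2 * 2 ^ j)"
    by (intro sum.cong) auto
  then show ?thesis
    by (simp only: binary_expansion[OF ab(1)] binary_expansion[OF ab(2)])
qed

lemma bij_betw_sub_bit:
  assumes "finite Q"
  shows "bij_betw (\<lambda>k. restrict (sub_bit Q k) Q) {..<2 ^ card Q} (Pi\<^sub>E Q (\<lambda>_. {..<2}))"
proof (rule inj_on_card_eq_imp_bij_betw)
  show "inj_on (\<lambda>k. restrict (sub_bit Q k) Q) {..<2 ^ card Q}"
    using sub_bit_eq_imp_eq[OF assms] by (intro inj_onI) (metis lessThan_iff restrict_apply')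
qed (auto simp: sub_bit_def card_PiE finite_PiE assms)

lemma sum_sub_bit_prod:
  fixes H :: "nat \<Rightarrow> nat \<Rightarrow> 'a::comm_semiring_1"
  assumes "finite Q"
  shows "(\<Sum>k<2 ^ card Q. \<Prod>q\<in>Q. H q (sub_bit Q k q)) = (\<Prod>q\<in>Q. \<Sum>s<2. H q s)"
proof -
  have "(\<Prod>q\<in>Q. \<Sum>s<2. H q s) = (\<Sum>g\<in>Pi\<^sub>E Q (\<lambda>_. {..<2}). \<Prod>q\<in>Q. H q (g q))"
    using assms by (simp add: prod_sum_PiE)
  also have "\<dots> = (\<Sum>k<2 ^ card Q. \<Prod>q\<in>Q. H q (restrict (sub_bit Q k) Q q))"
    by (rule sum.reindex_bij_betw[OF bij_betw_sub_bit[OF assms], symmetric])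
  also have "\<dots> = (\<Sum>k<2 ^ card Q. \<Prod>q\<in>Q. H q (sub_bit Q k q))"
    by (intro sum.cong prod.cong) auto
  finally show ?thesis ..
qed

lemma bij_betw_restrict_Z4n:
  "bij_betw (\<lambda>x. restrict x {1..n}) (Z4n n) (Pi\<^sub>E {1..n} (\<lambda>_. {..<4}))"
  by (rule bij_betw_byWitness[where f' = "\<lambda>g q. if q \<in> {1..n} then g q else 0"])
    (auto simp: Z4n_def fun_eq_iff)

lemma finite_Z4n: "finite (Z4n n)"
  using bij_betw_finite[OF bij_betw_restrict_Z4n] by (simp add: finite_PiE)

lemma sum_Z4n_prod:
  fixes f :: "nat \<Rightarrow> nat \<Rightarrow> 'a::comm_semiring_1"
  shows "(\<Sum>x\<in>Z4n n. \<Prod>q\<in>{1..n}. f q (x q)) = (\<Prod>q\<in>{1..n}. \<Sum>a<4. f q a)"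
proof -
  have "(\<Prod>q\<in>{1..n}. \<Sum>a<4. f q a) = (\<Sum>g\<in>Pi\<^sub>E {1..n} (\<lambda>_. {..<4}). \<Prod>q\<in>{1..n}. f q (g q))"
    by (simp add: prod_sum_PiE)
  also have "\<dots> = (\<Sum>x\<in>Z4n n. \<Prod>q\<in>{1..n}. f q (restrict x {1..n} q))"
    by (rule sum.reindex_bij_betw[OF bij_betw_restrict_Z4n, symmetric])
  also have "\<dots> = (\<Sum>x\<in>Z4n n. \<Prod>q\<in>{1..n}. f q (x q))"
    by (intro sum.cong prod.cong) auto
  finally show ?thesis ..
qed

lemma prod_if_const_zero:
  fixes c :: "'a::comm_semiring_1"
  assumes "finite A"
  shows "(\<Prod>q\<in>A. if P q then c else 0) = (if \<forall>q\<in>A. P q then c ^ card A else 0)"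
  using assms by (induction rule: finite_induct) auto

lemma sub_bit_less_2: "sub_bit Q k q < 2"
  by (simp add: sub_bit_def)

lemma qbit_eq_sub_bit:
  assumes "q \<in> {1..n}"
  shows "qbit n q i = sub_bit {1..n} i q"
proof -
  have "{p \<in> {1..n}. p < q} = {1..<q}"
    using assms by auto
  then show ?thesis
    using assms by (simp add: qbit_def sub_bit_def)
qed

lemma qbit_expansion:
  assumes "i < 2 ^ n"
  shows "(\<Sum>q\<in>{1..n}. qbit n q i * 2 ^ (n - q)) = i"
proof -
  have "(\<Sum>q\<in>{1..n}. qbit n q i * 2 ^ (n - q)) = (\<Sum>j<n. i div 2 ^ j mod 2 * 2 ^ j)"
    by (rule sum.reindex_bij_witness[of _ "\<lambda>j. n - j" "\<lambda>q. n - q"]) (auto simp: qbit_def)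
  also have "\<dots> = i"
    by (rule binary_expansion[OF assms])
  finally show ?thesis .
qed

lemma qbit_eq_imp_eq:
  assumes "k < 2 ^ n" "i < 2 ^ n" "\<forall>q\<in>{1..n}. qbit n q k = qbit n q i"
  shows "k = i"
proof -
  have "(\<Sum>q\<in>{1..n}. qbit n q k * 2 ^ (n - q)) = (\<Sum>q\<in>{1..n}. qbit n q i * 2 ^ (n - q))"
    using assms(3) by (intro sum.cong) auto
  then show ?thesis
    by (simp only: qbit_expansion assms(1,2))
qed

lemma binary_sum_qbit:
  assumes "\<forall>q\<in>{1..n}. f q < 2"
  shows "(\<Sum>q\<in>{1..n}. f q * 2 ^ (n - q)) < 2 ^ n"
    and "q \<in> {1..n} \<Longrightarrow> qbit n q (\<Sum>q\<in>{1..n}. f q * 2 ^ (n - q)) = f q"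
proof -
  have "restrict f {1..n} \<in> (\<lambda>k. restrict (sub_bit {1..n} k) {1..n}) ` {..<2 ^ card {1..n}}"
    using bij_betw_imp_surj_on[OF bij_betw_sub_bit[of "{1..n}"]] assms by auto
  then obtain i where i: "i < 2 ^ n" "restrict (sub_bit {1..n} i) {1..n} = restrict f {1..n}"
    by auto
  have f: "f q = qbit n q i" if "q \<in> {1..n}" for q
    using fun_cong[OF i(2), of q] that by (simp add: qbit_eq_sub_bit)
  have "(\<Sum>q\<in>{1..n}. f q * 2 ^ (n - q)) = i"
    using qbit_expansion[OF i(1)] by (simp add: f)
  then show "(\<Sum>q\<in>{1..n}. f q * 2 ^ (n - q)) < 2 ^ n"
    and "q \<in> {1..n} \<Longrightarrow> qbit n q (\<Sum>q\<in>{1..n}. f q * 2 ^ (n - q)) = f q"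
    using i(1) f by simp_all
qed

lemma Z4n_eqI:
  assumes "x \<in> Z4n n" "y \<in> Z4n n" "\<forall>q\<in>{1..n}. x q = y q"
  shows "x = y"
  using assms by (auto simp: Z4n_def fun_eq_iff)

lemma supp_disjoint_iff:
  assumes "x \<in> Z4n n"
  shows "supp n x \<inter> S = {} \<longleftrightarrow> (\<forall>q\<in>S. x q = 0)"
  using assms by (auto simp: supp_def Z4n_def)

lemma pauli1_trace:
  "a < 4 \<Longrightarrow> (\<Sum>s<2. pauli1 a $$ (s, s)) = (if a = 0 then 2 else 0)"
  by (auto simp: numeral_2_eq_2 eval_nat_numeral less_Suc_eq pauli1_def mat_of_rows_list_def)

lemma pauli1_orthogonal:
  "a < 4 \<Longrightarrow> b < 4 \<Longrightarrow>
    (\<Sum>s<2. \<Sum>t<2. cnj (pauli1 b $$ (s, t)) * pauli1 a $$ (s, t)) = (if a = b then 2 else 0)"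
  by (auto simp: numeral_2_eq_2 eval_nat_numeral less_Suc_eq pauli1_def mat_of_rows_list_def)

lemma pauli1_complete:
  "s < 2 \<Longrightarrow> t < 2 \<Longrightarrow> s' < 2 \<Longrightarrow> t' < 2 \<Longrightarrow>
    (\<Sum>a<4. cnj (pauli1 a $$ (s, t)) * pauli1 a $$ (s', t')) = (if s = s' \<and> t = t' then 2 else 0)"
  by (auto simp: numeral_2_eq_2 eval_nat_numeral less_Suc_eq pauli1_def mat_of_rows_list_def)

definition pauli_on :: "nat set \<Rightarrow> (nat \<Rightarrow> nat) \<Rightarrow> nat \<Rightarrow> nat \<Rightarrow> complex" where
  "pauli_on Q x a b = (\<Prod>q\<in>Q. pauli1 (x q) $$ (sub_bit Q a q, sub_bit Q b q))"

lemma pauli_eq_pauli_on: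
  "i < 2 ^ n \<Longrightarrow> j < 2 ^ n \<Longrightarrow> pauli n x $$ (i, j) = pauli_on {1..n} x i j"
  by (auto simp: pauli_def pauli_on_def qbit_eq_sub_bit intro!: prod.cong)

lemma trace_pauli_on:
  assumes "finite Q" "\<forall>q\<in>Q. x q < 4"
  shows "(\<Sum>k<2 ^ card Q. pauli_on Q x k k) = (if \<forall>q\<in>Q. x q = 0 then 2 ^ card Q else 0)"
proof -
  have "(\<Sum>k<2 ^ card Q. pauli_on Q x k k) = (\<Prod>q\<in>Q. \<Sum>s<2. pauli1 (x q) $$ (s, s))"
    unfolding pauli_on_def by (rule sum_sub_bit_prod[OF assms(1)])
  also have "\<dots> = (\<Prod>q\<in>Q. if x q = 0 then 2 else 0)"
    using assms(2) by (intro prod.cong) (simp_all add: pauli1_trace)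
  finally show ?thesis
    by (simp add: prod_if_const_zero assms(1))
qed

lemma pauli_on_orthogonal:
  assumes Q: "finite Q" and "\<forall>q\<in>Q. x q < 4" "\<forall>q\<in>Q. y q < 4"
  shows "(\<Sum>a<2 ^ card Q. \<Sum>b<2 ^ card Q. cnj (pauli_on Q y a b) * pauli_on Q x a b)
    = (if \<forall>q\<in>Q. x q = y q then 2 ^ card Q else 0)"
proof -
  define H where "H q s t = cnj (pauli1 (y q) $$ (s, t)) * pauli1 (x q) $$ (s, t)" for q s t
  have "(\<Sum>a<2 ^ card Q. \<Sum>b<2 ^ card Q. cnj (pauli_on Q y a b) * pauli_on Q x a b)
      = (\<Sum>a<2 ^ card Q. \<Sum>b<2 ^ card Q. \<Prod>q\<in>Q. H q (sub_bit Q a q) (sub_bit Q b q))"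
    by (simp add: pauli_on_def H_def prod.distrib)
  also have "\<dots> = (\<Sum>a<2 ^ card Q. \<Prod>q\<in>Q. \<Sum>t<2. H q (sub_bit Q a q) t)"
    by (intro sum.cong refl sum_sub_bit_prod[OF Q])
  also have "\<dots> = (\<Prod>q\<in>Q. \<Sum>s<2. \<Sum>t<2. H q s t)"
    by (rule sum_sub_bit_prod[OF Q])
  also have "\<dots> = (\<Prod>q\<in>Q. if x q = y q then 2 else 0)"
    using assms(2,3) by (intro prod.cong) (simp_all add: H_def pauli1_orthogonal)
  finally show ?thesis
    by (simp add: prod_if_const_zero Q)
qed

lemma pauli_orthogonal:
  assumes "x \<in> Z4n n" "y \<in> Z4n n"
  shows "(\<Sum>i<2 ^ n. \<Sum>j<2 ^ n. cnj (pauli n y $$ (i, j)) * pauli n x $$ (i, j))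
    = (if x = y then 2 ^ n else 0)"
proof -
  have "(\<Sum>i<2 ^ n. \<Sum>j<2 ^ n. cnj (pauli n y $$ (i, j)) * pauli n x $$ (i, j))
      = (\<Sum>i<2 ^ card {1..n}. \<Sum>j<2 ^ card {1..n}. cnj (pauli_on {1..n} y i j) * pauli_on {1..n} x i j)"
    by (simp add: pauli_eq_pauli_on)
  also have "\<dots> = (if \<forall>q\<in>{1..n}. x q = y q then 2 ^ n else 0)"
    using pauli_on_orthogonal[of "{1..n}" x y] assms by (simp add: Z4n_def)
  finally show ?thesis
    using Z4n_eqI[OF assms] by auto
qed

lemma pauli_complete:
  assumes "i < 2 ^ n" "j < 2 ^ n" "k < 2 ^ n" "l < 2 ^ n"
  shows "(\<Sum>x\<in>Z4n n. cnj (pauli n x $$ (k, l)) * pauli n x $$ (i, j))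
    = (if k = i \<and> l = j then 2 ^ n else 0)"
proof -
  have "(\<Sum>x\<in>Z4n n. cnj (pauli n x $$ (k, l)) * pauli n x $$ (i, j))
      = (\<Sum>x\<in>Z4n n. \<Prod>q\<in>{1..n}. cnj (pauli1 (x q) $$ (qbit n q k, qbit n q l))
                                   * pauli1 (x q) $$ (qbit n q i, qbit n q j))"
    using assms by (simp add: pauli_def prod.distrib)
  also have "\<dots> = (\<Prod>q\<in>{1..n}. \<Sum>a<4. cnj (pauli1 a $$ (qbit n q k, qbit n q l))
                                   * pauli1 a $$ (qbit n q i, qbit n q j))"
    by (rule sum_Z4n_prod)
  also have "\<dots> = (\<Prod>q\<in>{1..n}. if qbit n q k = qbit n q i \<and> qbit n q l = qbit n q j then 2 else 0)"
    by (intro prod.cong refl pauli1_complete) (simp_all add: qbit_def)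
  also have "\<dots> = (if k = i \<and> l = j then 2 ^ n else 0)"
    using qbit_eq_imp_eq[of k n i] qbit_eq_imp_eq[of l n j] assms
    by (auto simp: prod_if_const_zero)
  finally show ?thesis .
qed

lemma expansion_by_pauli_inner:
  assumes ij: "i < 2 ^ n" "j < 2 ^ n"
  shows "U $$ (i, j) = (\<Sum>x\<in>Z4n n.
    (\<Sum>k<2 ^ n. \<Sum>l<2 ^ n. cnj (pauli n x $$ (k, l)) * U $$ (k, l)) / 2 ^ n * pauli n x $$ (i, j))"
proof -
  have "(\<Sum>x\<in>Z4n n.
      (\<Sum>k<2 ^ n. \<Sum>l<2 ^ n. cnj (pauli n x $$ (k, l)) * U $$ (k, l)) / 2 ^ n * pauli n x $$ (i, j))
    = (\<Sum>x\<in>Z4n n. \<Sum>k<2 ^ n. \<Sum>l<2 ^ n.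
        U $$ (k, l) / 2 ^ n * (cnj (pauli n x $$ (k, l)) * pauli n x $$ (i, j)))"
    by (simp only: sum_divide_distrib sum_distrib_right) (simp add: mult_ac)
  also have "\<dots> = (\<Sum>k<2 ^ n. \<Sum>l<2 ^ n. \<Sum>x\<in>Z4n n.
        U $$ (k, l) / 2 ^ n * (cnj (pauli n x $$ (k, l)) * pauli n x $$ (i, j)))"
    by (simp only: sum.swap[of _ "Z4n n"])
  also have "\<dots> = (\<Sum>k<2 ^ n. \<Sum>l<2 ^ n.
      U $$ (k, l) / 2 ^ n * (\<Sum>x\<in>Z4n n. cnj (pauli n x $$ (k, l)) * pauli n x $$ (i, j)))"
    by (simp only: sum_distrib_left)
  also have "\<dots> = (\<Sum>k<2 ^ n. \<Sum>l<2 ^ n. if k = i \<and> l = j then U $$ (i, j) else 0)"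
    using ij by (intro sum.cong refl) (simp add: pauli_complete)
  also have "\<dots> = (\<Sum>k<2 ^ n. if k = i then U $$ (i, j) else 0)"
    using ij by (intro sum.cong refl) auto
  also have "\<dots> = U $$ (i, j)"
    using ij by simp
  finally show ?thesis ..
qed

lemma pauli_inner_of_expansion:
  assumes U: "\<forall>i<2 ^ n. \<forall>j<2 ^ n. U $$ (i, j) = (\<Sum>x\<in>Z4n n. c x * pauli n x $$ (i, j))"
    and y: "y \<in> Z4n n"
  shows "(\<Sum>i<2 ^ n. \<Sum>j<2 ^ n. cnj (pauli n y $$ (i, j)) * U $$ (i, j)) = 2 ^ n * c y"
proof -
  have "(\<Sum>i<2 ^ n. \<Sum>j<2 ^ n. cnj (pauli n y $$ (i, j)) * U $$ (i, j))
      = (\<Sum>i<2 ^ n. \<Sum>j<2 ^ n. \<Sum>x\<in>Z4n n. c x * (cnj (pauli n y $$ (i, j)) * pauli n x $$ (i, j)))"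
    using U by (intro sum.cong refl) (simp add: sum_distrib_left mult_ac)
  also have "\<dots> = (\<Sum>x\<in>Z4n n. \<Sum>i<2 ^ n. \<Sum>j<2 ^ n. c x * (cnj (pauli n y $$ (i, j)) * pauli n x $$ (i, j)))"
    by (simp only: sum.swap[of _ _ "Z4n n"])
  also have "\<dots> = (\<Sum>x\<in>Z4n n. c x * (\<Sum>i<2 ^ n. \<Sum>j<2 ^ n. cnj (pauli n y $$ (i, j)) * pauli n x $$ (i, j)))"
    by (simp only: sum_distrib_left)
  also have "\<dots> = (\<Sum>x\<in>Z4n n. if x = y then 2 ^ n * c y else 0)"
    using y by (intro sum.cong refl) (simp add: pauli_orthogonal)
  also have "\<dots> = 2 ^ n * c y"
    using y finite_Z4n by simp
  finally show ?thesis .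
qed

lemma pauli_coeff_expansion:
  assumes "i < 2 ^ n" "j < 2 ^ n"
  shows "U $$ (i, j) = (\<Sum>x\<in>Z4n n. pauli_coeff n U x * pauli n x $$ (i, j))"
proof -
  define c where "c x = (if x \<in> Z4n n
    then (\<Sum>k<2 ^ n. \<Sum>l<2 ^ n. cnj (pauli n x $$ (k, l)) * U $$ (k, l)) / 2 ^ n else 0)" for x
  have c_outside: "\<forall>x. x \<notin> Z4n n \<longrightarrow> c x = 0"
    by (simp add: c_def)
  have c_expansion: "\<forall>i<2 ^ n. \<forall>j<2 ^ n. U $$ (i, j) = (\<Sum>x\<in>Z4n n. c x * pauli n x $$ (i, j))"
  proof (intro allI impI)
    fix i j :: nat assume ij: "i < 2 ^ n" "j < 2 ^ n"
    have "(\<Sum>x\<in>Z4n n. c x * pauli n x $$ (i, j)) = (\<Sum>x\<in>Z4n n.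
        (\<Sum>k<2 ^ n. \<Sum>l<2 ^ n. cnj (pauli n x $$ (k, l)) * U $$ (k, l)) / 2 ^ n * pauli n x $$ (i, j))"
      by (intro sum.cong) (simp_all add: c_def)
    then show "U $$ (i, j) = (\<Sum>x\<in>Z4n n. c x * pauli n x $$ (i, j))"
      by (rule trans[OF expansion_by_pauli_inner[OF ij] sym])
  qed
  have "pauli_coeff n U = c"
    unfolding pauli_coeff_def
  proof (rule the_equality)
    fix c' assume c': "(\<forall>x. x \<notin> Z4n n \<longrightarrow> c' x = 0) \<and>
      (\<forall>i<2 ^ n. \<forall>j<2 ^ n. U $$ (i, j) = (\<Sum>x\<in>Z4n n. c' x * pauli n x $$ (i, j)))"
    show "c' = c"
    proof
      fix x show "c' x = c x"
      proof (cases "x \<in> Z4n n")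
        case True
        then have "(\<Sum>i<2 ^ n. \<Sum>j<2 ^ n. cnj (pauli n x $$ (i, j)) * U $$ (i, j)) = 2 ^ n * c' x"
          using pauli_inner_of_expansion[of n U c' x] c' by blast
        then show ?thesis
          using True by (simp add: c_def)
      next
        case False
        then show ?thesis
          using c' c_outside by simp
      qed
    qed
  qed (use c_outside c_expansion in blast)
  then show ?thesis
    using c_expansion assms by simp
qed

lemma merge_idx_less: "merge_idx n S a k < 2 ^ n"
  unfolding merge_idx_def by (rule binary_sum_qbit(1)) (simp add: sub_bit_less_2)

lemma qbit_merge_idx:
  "q \<in> {1..n} \<Longrightarrow>
    qbit n q (merge_idx n S a k) = (if q \<in> S then sub_bit S k q else sub_bit ({1..n} - S) a q)"
  unfolding merge_idx_def by (rule binary_sum_qbit(2)) (simp_all add: sub_bit_less_2)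

lemma pauli_merge_idx:
  assumes "S \<subseteq> {1..n}"
  shows "pauli n x $$ (merge_idx n S a k, merge_idx n S b k)
    = pauli_on ({1..n} - S) x a b * pauli_on S x k k"
proof -
  have "pauli n x $$ (merge_idx n S a k, merge_idx n S b k)
      = (\<Prod>q\<in>{1..n}. pauli1 (x q) $$ (qbit n q (merge_idx n S a k), qbit n q (merge_idx n S b k)))"
    by (simp add: pauli_def merge_idx_less)
  also have "\<dots> = (\<Prod>q\<in>{1..n} - S. pauli1 (x q) $$ (qbit n q (merge_idx n S a k), qbit n q (merge_idx n S b k)))
      * (\<Prod>q\<in>S. pauli1 (x q) $$ (qbit n q (merge_idx n S a k), qbit n q (merge_idx n S b k)))"
    by (rule prod.subset_diff[OF assms finite_atLeastAtMost])
  also have "\<dots> = pauli_on ({1..n} - S) x a b * pauli_on S x k k"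
    unfolding pauli_on_def using assms
    by (intro arg_cong2[where f = "(*)"] prod.cong) (auto simp: qbit_merge_idx)
  finally show ?thesis .
qed

lemma ptrace_pauli_expansion:
  assumes S: "S \<subseteq> {1..n}" and ab: "a < 2 ^ card ({1..n} - S)" "b < 2 ^ card ({1..n} - S)"
  shows "ptrace n S U $$ (a, b) = 2 ^ card S *
    (\<Sum>x\<in>{x \<in> Z4n n. \<forall>q\<in>S. x q = 0}. pauli_coeff n U x * pauli_on ({1..n} - S) x a b)"
proof -
  have finS: "finite S"
    using S finite_subset by blast
  have "ptrace n S U $$ (a, b) = (\<Sum>k<2 ^ card S. U $$ (merge_idx n S a k, merge_idx n S b k))"
    using ab by (simp add: ptrace_def)
  also have "\<dots> = (\<Sum>k<2 ^ card S. \<Sum>x\<in>Z4n n.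
      pauli_coeff n U x * (pauli_on ({1..n} - S) x a b * pauli_on S x k k))"
    by (intro sum.cong refl)
      (simp only: pauli_coeff_expansion[OF merge_idx_less merge_idx_less, where U = U]
        pauli_merge_idx[OF S])
  also have "\<dots> = (\<Sum>x\<in>Z4n n. pauli_coeff n U x * pauli_on ({1..n} - S) x a b
      * (\<Sum>k<2 ^ card S. pauli_on S x k k))"
    by (subst sum.swap) (simp add: sum_distrib_left mult.assoc)
  also have "\<dots> = (\<Sum>x\<in>Z4n n. pauli_coeff n U x * pauli_on ({1..n} - S) x a b
      * (if \<forall>q\<in>S. x q = 0 then 2 ^ card S else 0))"
    by (intro sum.cong refl) (simp add: trace_pauli_on finS Z4n_def)
  also have "\<dots> = (\<Sum>x\<in>Z4n n. 2 ^ card S *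
      (if \<forall>q\<in>S. x q = 0 then pauli_coeff n U x * pauli_on ({1..n} - S) x a b else 0))"
    by (intro sum.cong refl) simp
  also have "\<dots> = 2 ^ card S *
      (\<Sum>x\<in>{x \<in> Z4n n. \<forall>q\<in>S. x q = 0}. pauli_coeff n U x * pauli_on ({1..n} - S) x a b)"
    by (simp only: sum_distrib_left[symmetric] sum.inter_filter[OF finite_Z4n])
  finally show ?thesis .
qed

lemma mtrace_adj_mult_self:
  "mtrace (adj A * A) = (\<Sum>i<dim_row A. \<Sum>j<dim_col A. cnj (A $$ (i, j)) * A $$ (i, j))"
proof -
  have "mtrace (adj A * A) = (\<Sum>j<dim_col A. \<Sum>i<dim_row A. cnj (A $$ (i, j)) * A $$ (i, j))"
    by (simp add: mtrace_def adj_def scalar_prod_def lessThan_atLeast0)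
  then show ?thesis
    by (simp only: sum.swap[of _ "{..<dim_row A}"])
qed

lemma ptrace_adj:
  assumes "U \<in> carrier_mat (2 ^ n) (2 ^ n)"
  shows "ptrace n S (adj U) = adj (ptrace n S U)"
  using assms by (intro eq_matI) (simp_all add: ptrace_def adj_def merge_idx_less)

lemma sum_norm_sq_orthogonal:
  fixes v :: "'x \<Rightarrow> 'a \<Rightarrow> 'b \<Rightarrow> complex"
  assumes orth: "\<And>x y. x \<in> X \<Longrightarrow> y \<in> X \<Longrightarrow>
    (\<Sum>a\<in>A. \<Sum>b\<in>B. cnj (v y a b) * v x a b) = (if x = y then N else 0)"
    and X: "finite X"
  shows "(\<Sum>a\<in>A. \<Sum>b\<in>B. cnj (\<Sum>x\<in>X. d x * v x a b) * (\<Sum>x\<in>X. d x * v x a b))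
    = N * (\<Sum>x\<in>X. cnj (d x) * d x)"
proof -
  have "(\<Sum>a\<in>A. \<Sum>b\<in>B. cnj (\<Sum>x\<in>X. d x * v x a b) * (\<Sum>x\<in>X. d x * v x a b))
      = (\<Sum>a\<in>A. \<Sum>b\<in>B. \<Sum>x\<in>X. \<Sum>y\<in>X. cnj (d y) * d x * (cnj (v y a b) * v x a b))"
    by (simp add: sum_product mult_ac)
  also have "\<dots> = (\<Sum>x\<in>X. \<Sum>y\<in>X. \<Sum>a\<in>A. \<Sum>b\<in>B. cnj (d y) * d x * (cnj (v y a b) * v x a b))"
    by (simp only: sum.swap[of _ X A] sum.swap[of _ X B])
  also have "\<dots> = (\<Sum>x\<in>X. \<Sum>y\<in>X. cnj (d y) * d x * (if x = y then N else 0))"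
    by (simp only: sum_distrib_left[symmetric] orth cong: sum.cong)
  also have "\<dots> = (\<Sum>x\<in>X. \<Sum>y\<in>X. if x = y then N * (cnj (d x) * d x) else 0)"
    by (intro sum.cong refl) auto
  also have "\<dots> = N * (\<Sum>x\<in>X. cnj (d x) * d x)"
    using X by (simp add: sum_distrib_left)
  finally show ?thesis .
qed

lemma mtrace_ptrace_adj_mult_ptrace:
  assumes U: "U \<in> carrier_mat (2 ^ n) (2 ^ n)" and S: "S \<subseteq> {1..n}"
  shows "mtrace (ptrace n S (adj U) * ptrace n S U) = 2 ^ (n + card S) *
    (\<Sum>x\<in>{x \<in> Z4n n. \<forall>q\<in>S. x q = 0}. cnj (pauli_coeff n U x) * pauli_coeff n U x)"
proof -
  let ?T = "{1..n} - S" and ?X = "{x \<in> Z4n n. \<forall>q\<in>S. x q = 0}" and ?c = "pauli_coeff n U"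
  have orth: "(\<Sum>a<2 ^ card ?T. \<Sum>b<2 ^ card ?T. cnj (pauli_on ?T y a b) * pauli_on ?T x a b)
      = (if x = y then 2 ^ card ?T else 0)" if "x \<in> ?X" "y \<in> ?X" for x y
  proof -
    have "(\<forall>q\<in>?T. x q = y q) \<longleftrightarrow> x = y"
    proof
      assume agree: "\<forall>q\<in>?T. x q = y q"
      show "x = y"
        by (rule Z4n_eqI[of x n y]) (use agree that in auto)
    qed simp
    then show ?thesis
      using pauli_on_orthogonal[of ?T x y] that by (simp add: Z4n_def)
  qed
  have dims: "dim_row (ptrace n S U) = 2 ^ card ?T" "dim_col (ptrace n S U) = 2 ^ card ?T"
    by (simp_all add: ptrace_def)
  have powers: "(2::complex) ^ card ?T * (2 ^ card S * 2 ^ card S) = 2 ^ (n + card S)"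
  proof -
    have "card ?T + (card S + card S) = n + card S"
      using card_Diff_subset[OF finite_subset[OF S] S] card_mono[OF _ S] by simp
    then show ?thesis
      by (simp only: power_add[symmetric])
  qed
  have "mtrace (ptrace n S (adj U) * ptrace n S U)
      = (\<Sum>a<2 ^ card ?T. \<Sum>b<2 ^ card ?T. cnj (ptrace n S U $$ (a, b)) * ptrace n S U $$ (a, b))"
    by (simp add: ptrace_adj[OF U] mtrace_adj_mult_self dims)
  also have "\<dots> = (\<Sum>a<2 ^ card ?T. \<Sum>b<2 ^ card ?T.
      cnj (\<Sum>x\<in>?X. (2 ^ card S * ?c x) * pauli_on ?T x a b) * (\<Sum>x\<in>?X. (2 ^ card S * ?c x) * pauli_on ?T x a b))"
    by (intro sum.cong refl) (simp add: ptrace_pauli_expansion[OF S] sum_distrib_left mult.assoc)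
  also have "\<dots> = 2 ^ card ?T * (\<Sum>x\<in>?X. cnj (2 ^ card S * ?c x) * (2 ^ card S * ?c x))"
    by (rule sum_norm_sq_orthogonal[OF orth]) (simp_all add: finite_Z4n)
  also have "\<dots> = 2 ^ card ?T * (2 ^ card S * 2 ^ card S) * (\<Sum>x\<in>?X. cnj (?c x) * ?c x)"
    by (simp add: sum_distrib_left mult_ac)
  finally show ?thesis
    by (simp only: powers)
qed

lemma merge_idx_empty: "a < 2 ^ n \<Longrightarrow> merge_idx n {} a k = a"
  using qbit_expansion[of a n] by (simp add: merge_idx_def qbit_eq_sub_bit)

lemma ptrace_empty:
  assumes "U \<in> carrier_mat (2 ^ n) (2 ^ n)"
  shows "ptrace n {} U = U"
  using assms by (intro eq_matI) (simp_all add: ptrace_def merge_idx_empty)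

lemma pauli_coeff_parseval:
  assumes "unitary_mat (2 ^ n) U"
  shows "(\<Sum>x\<in>Z4n n. cnj (pauli_coeff n U x) * pauli_coeff n U x) = 1"
proof -
  have U: "U \<in> carrier_mat (2 ^ n) (2 ^ n)" and unit: "adj U * U = 1\<^sub>m (2 ^ n)"
    using assms by (simp_all add: unitary_mat_def)
  have "2 ^ n = mtrace (adj U * U)"
    by (simp add: unit mtrace_def)
  also have "\<dots> = mtrace (ptrace n {} (adj U) * ptrace n {} U)"
    by (simp add: ptrace_adj[OF U] ptrace_empty[OF U])
  also have "\<dots> = 2 ^ n * (\<Sum>x\<in>Z4n n. cnj (pauli_coeff n U x) * pauli_coeff n U x)"
    using mtrace_ptrace_adj_mult_ptrace[OF U, of "{}"] by simp
  finally show ?thesis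
    by simp
qed

lemma influence_eq_ptrace:
  assumes "unitary_mat (2 ^ n) U" and "S \<subseteq> {1..n}"
  shows "complex_of_real (influence n S U)
    = 1 - 1 / 2 ^ (n + card S) * mtrace (ptrace n S (adj U) * ptrace n S U)"
proof -
  let ?g = "\<lambda>x. cnj (pauli_coeff n U x) * pauli_coeff n U x"
  let ?inf = "{x \<in> Z4n n. supp n x \<inter> S \<noteq> {}}" and ?out = "{x \<in> Z4n n. \<forall>q\<in>S. x q = 0}"
  have "complex_of_real (influence n S U) = (\<Sum>x\<in>?inf. ?g x)"
    by (simp only: influence_def of_real_sum complex_norm_square) (simp add: mult.commute)
  moreover have "(\<Sum>x\<in>?inf. ?g x) + (\<Sum>x\<in>?out. ?g x) = 1"
  proof -
    have "Z4n n = ?inf \<union> ?out" "?inf \<inter> ?out = {}"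
      using supp_disjoint_iff by blast+
    then show ?thesis
      using pauli_coeff_parseval[OF assms(1)] finite_Z4n
      by (metis (no_types, lifting) finite_Un sum.union_disjoint)
  qed
  moreover have "mtrace (ptrace n S (adj U) * ptrace n S U) = 2 ^ (n + card S) * (\<Sum>x\<in>?out. ?g x)"
    using assms by (simp add: mtrace_ptrace_adj_mult_ptrace unitary_mat_def)
  ultimately show ?thesis
    by (simp add: eq_diff_eq)
qed

theorem mainTheorem12:
  fixes n :: nat and U :: "complex mat"
  assumes "unitary_mat (2 ^ n) U"
  shows "(\<forall>j\<in>{1..n}. complex_of_real (influence n {j} U) =
            1 - 1 / 2 ^ (n + 1) * mtrace (ptrace n {j} (adj U) * ptrace n {j} U))
       \<and> (\<forall>S. S \<subseteq> {1..n} \<longrightarrow> complex_of_real (influence n S U) =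
            1 - 1 / 2 ^ (n + card S) * mtrace (ptrace n S (adj U) * ptrace n S U))"
  using influence_eq_ptrace[OF assms, of "{_}"] influence_eq_ptrace[OF assms] by simp

end
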